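(* Let $A=(a_0,\dots,a_{n-1})$ be an array of pairwise distinct numbers, $k_1<k_2$ positive integers. Consider an iteration of Cover-approx$(A,k_1,k_2)$ whose computed suffix is $(b,c)$, and suppose the next iteration computes the prefix $(b,d)$. Let $Y=(y_1,\dots,y_{k_1})$ be the lexicographically minimal (with respect to the sequence of positions) increasing subsequence of length $k_1$ of $(a_b,\dots,a_c)$, and $X'=(x'_1,\dots,x'_{k_2})$ the lexicographically minimal increasing subsequence of length $k_2$ of $(a_b,\dots,a_d)$, where $y_t,x'_t$ denote positions. Then $x'_i\ge y_i$ for all $1\le i\le k_1$.
   Context: For $i\le j$, $\mathrm{LIS}(i,j)$ denotes the length of a longest increasing subsequence of $(a_i,\dots,a_j)$. Cover-approx$(A,k_1,k_2)$: set $C=\emptyset$, $i=0$. Repeat: let $j$ be the smallest index $\ge i$ with $\mathrm{LIS}(i,j)\ge k_2$; if none exists, return $C$. Let $q$ be the largest index $\le j$ with $\mathrm{LIS}(q,j)\ge k_1$. Add the segment $(q,j,L)$ to $C$, where $L$ is a longest increasing subsequence of $(a_q,\dots,a_j)$, and set $i=q$. In an iteration, $(i,j)$ is called the computed prefix and $(q,j)$ the computed suffix. *)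

theory Defs
  imports Main "HOL.Real"
begin

text \<open>The array A = (a_0,...,a_{n-1}) is a list; positions are 0-based list indices.\<close>

definition is_inc_subseq :: "real list \<Rightarrow> nat \<Rightarrow> nat \<Rightarrow> nat list \<Rightarrow> bool" where
  "is_inc_subseq A i j ps \<longleftrightarrow>
     j < length A \<and> set ps \<subseteq> {i..j} \<and> sorted_wrt (\<lambda>p q. p < q \<and> A ! p < A ! q) ps"

definition LIS :: "real list \<Rightarrow> nat \<Rightarrow> nat \<Rightarrow> nat" where
  "LIS A i j = Max (length ` {ps. is_inc_subseq A i j ps})"

text \<open>One iteration of Cover-approx started at index i: returns Some (q, j), where
  (i,j) is the computed prefix and (q,j) the computed suffix, or None if the
  algorithm stops.\<close>
definition cover_step :: "real list \<Rightarrow> nat \<Rightarrow> nat \<Rightarrow> nat \<Rightarrow> (nat \<times> nat) option" where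
  "cover_step A k1 k2 i =
     (if \<exists>j. i \<le> j \<and> j < length A \<and> k2 \<le> LIS A i j then
        (let j = (LEAST j. i \<le> j \<and> j < length A \<and> k2 \<le> LIS A i j);
             q = (GREATEST q. q \<le> j \<and> k1 \<le> LIS A q j)
         in Some (q, j))
      else None)"

text \<open>Value of the variable i at the start of iteration m (None if the algorithm
  has already returned before iteration m).\<close>
fun cover_start :: "real list \<Rightarrow> nat \<Rightarrow> nat \<Rightarrow> nat \<Rightarrow> nat option" where
  "cover_start A k1 k2 0 = Some 0"
| "cover_start A k1 k2 (Suc m) =
     (case cover_start A k1 k2 m of
        None \<Rightarrow> None
      | Some i \<Rightarrow> map_option fst (cover_step A k1 k2 i))"

definition lexmin_inc_subseq :: "real list \<Rightarrow> nat \<Rightarrow> nat \<Rightarrow> nat \<Rightarrow> nat list \<Rightarrow> bool" where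
  "lexmin_inc_subseq A i j k Y \<longleftrightarrow>
     is_inc_subseq A i j Y \<and> length Y = k \<and>
     (\<forall>Z. is_inc_subseq A i j Z \<and> length Z = k \<longrightarrow>
          Y = Z \<or> (Y, Z) \<in> lexord {(p, q). p < q})"

end

theory Submission
  imports Defs
begin

text \<open>Both computed segments are saturated: LIS(b,c) = k1 and LIS(b,d) = k2, whence c < d.
  Suppose X'_t < Y_t for some t, and let t be the first and s the last such index. Then
  X'_0..X'_s followed by Y_{s+1},... is again a k1-chain of (a_b,...,a_c): if the junction
  failed, Y_0..Y_{s+1} followed by X'_{s+2},... would be a (k2+1)-chain of (a_b,...,a_d).
  Replacing its first t entries by Y_0..Y_{t-1} gives a k1-chain that agrees with Y before t
  and is smaller at t, contradicting the minimality of Y. This junction needs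
  a_{Y_t} < a_{X'_t}; otherwise, the values being distinct, X'_0..X'_t followed by Y_t,...
  would be a (k1+1)-chain of (a_b,...,a_c).\<close>

definition inc_before :: "real list \<Rightarrow> nat \<Rightarrow> nat \<Rightarrow> bool" where
  "inc_before A p q \<longleftrightarrow> p < q \<and> A ! p < A ! q"

lemma transp_inc_before: "transp (inc_before A)"
  by (auto intro: transpI simp: inc_before_def)

lemma is_inc_subseq_iff:
  "is_inc_subseq A i j ps \<longleftrightarrow>
     j < length A \<and> set ps \<subseteq> {i..j} \<and> sorted_wrt (inc_before A) ps"
  by (simp add: is_inc_subseq_def inc_before_def[abs_def])

lemma is_inc_subseq_nth:
  assumes "is_inc_subseq A i j ps" "s < length ps"
  shows "i \<le> ps ! s" "ps ! s \<le> j" "ps ! s < length A"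
proof -
  have "ps ! s \<in> set ps" using assms(2) by (rule nth_mem)
  then show "i \<le> ps ! s" "ps ! s \<le> j" "ps ! s < length A"
    using assms(1) by (auto simp: is_inc_subseq_def)
qed

lemma is_inc_subseq_nth_less:
  assumes "is_inc_subseq A i j ps" "s < s'" "s' < length ps"
  shows "inc_before A (ps ! s) (ps ! s')"
  using assms sorted_wrt_nth_less[of "inc_before A" ps s s'] by (simp add: is_inc_subseq_iff)

lemma is_inc_subseq_nth_mono:
  assumes "is_inc_subseq A i j ps" "s \<le> s'" "s' < length ps"
  shows "ps ! s \<le> ps ! s'"
  using assms is_inc_subseq_nth_less[of A i j ps s s']
  by (cases "s = s'") (auto simp: inc_before_def)

lemma sorted_wrt_take_append_drop:
  assumes "transp R" "sorted_wrt R xs" "sorted_wrt R ys" "a < length xs"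
    and link: "e < length ys \<Longrightarrow> R (xs ! a) (ys ! e)"
  shows "sorted_wrt R (take (Suc a) xs @ drop e ys)"
proof (cases "e < length ys")
  case True
  have xs: "take (Suc a) xs = take a xs @ [xs ! a]" using assms(4) by (simp add: take_Suc_conv_app_nth)
  have ys: "drop e ys = ys ! e # drop (Suc e) ys" using True by (simp add: Cons_nth_drop_Suc)
  have "sorted_wrt R (take a xs @ [xs ! a])" using assms(2) xs by (metis sorted_wrt_take)
  moreover have "sorted_wrt R (ys ! e # drop (Suc e) ys)" using assms(3) ys by (metis sorted_wrt_drop)
  ultimately show ?thesis
    unfolding xs ys using link[OF True] assms(1)
    by (auto simp: sorted_wrt_append dest: transpD[OF assms(1)])
qed (use assms(2) in simp)

lemma is_inc_subseq_splice:
  assumes xs: "is_inc_subseq A i j' xs" and ys: "is_inc_subseq A i j ys"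
    and a: "a < length xs" "xs ! a \<le> j"
    and link: "e < length ys \<Longrightarrow> inc_before A (xs ! a) (ys ! e)"
  shows "is_inc_subseq A i j (take (Suc a) xs @ drop e ys)"
proof -
  have "set (take (Suc a) xs) \<subseteq> {i..j}"
  proof
    fix x assume "x \<in> set (take (Suc a) xs)"
    then obtain s where "s \<le> a" "x = xs ! s"
      using a(1) by (auto simp: in_set_conv_nth less_Suc_eq_le)
    then show "x \<in> {i..j}"
      using is_inc_subseq_nth[OF xs] is_inc_subseq_nth_mono[OF xs] a by fastforce
  qed
  moreover have "sorted_wrt (inc_before A) (take (Suc a) xs @ drop e ys)"
    using xs ys a(1) link
    by (intro sorted_wrt_take_append_drop transp_inc_before) (auto simp: is_inc_subseq_iff)
  ultimately show ?thesis
    using ys by (auto simp: is_inc_subseq_iff dest: in_set_dropD)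
qed

lemma lexmin_inc_subseq_nth_le_common_prefix:
  assumes Y: "lexmin_inc_subseq A i j k Y" and Z: "is_inc_subseq A i j Z" "length Z = k"
    and prefix: "take t Z = take t Y" and t: "t < k"
  shows "Y ! t \<le> Z ! t"
proof (rule ccontr)
  assume less: "\<not> Y ! t \<le> Z ! t"
  have "length Y = k" using Y by (simp add: lexmin_inc_subseq_def)
  then have Y_eq: "Y = take t Y @ Y ! t # drop (Suc t) Y" using t by (metis id_take_nth_drop)
  have Z_eq: "Z = take t Y @ Z ! t # drop (Suc t) Z" using Z t prefix by (metis id_take_nth_drop)
  have "(Y, Z) \<notin> lexord {(p, q). p < q}"
  proof
    assume "(Y, Z) \<in> lexord {(p, q). p < q}"
    then have "(take t Y @ Y ! t # drop (Suc t) Y, take t Y @ Z ! t # drop (Suc t) Z)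
        \<in> lexord {(p, q). p < q}"
      using Y_eq Z_eq by argo
    then show False using less by (simp add: irrefl_def)
  qed
  moreover have "Y \<noteq> Z" using less by auto
  ultimately show False using Y Z by (auto simp: lexmin_inc_subseq_def)
qed

lemma finite_inc_subseqs: "finite {ps. is_inc_subseq A i j ps}"
proof (rule finite_subset)
  show "{ps. is_inc_subseq A i j ps} \<subseteq> {xs. set xs \<subseteq> {i..j} \<and> length xs \<le> card {i..j}}"
  proof
    fix ps assume "ps \<in> {ps. is_inc_subseq A i j ps}"
    then have ps: "set ps \<subseteq> {i..j}" "sorted_wrt (inc_before A) ps"
      by (auto simp: is_inc_subseq_iff)
    have "sorted_wrt (<) ps"
      using ps(2) by (rule sorted_wrt_mono_rel[rotated]) (simp add: inc_before_def)
    then have "length ps = card (set ps)" by (simp add: distinct_card strict_sorted_iff)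
    also have "\<dots> \<le> card {i..j}" using ps(1) by (intro card_mono) auto
    finally show "ps \<in> {xs. set xs \<subseteq> {i..j} \<and> length xs \<le> card {i..j}}" using ps(1) by simp
  qed
qed (rule finite_lists_length_le, simp)

lemma length_le_LIS: "is_inc_subseq A i j ps \<Longrightarrow> length ps \<le> LIS A i j"
  unfolding LIS_def using finite_inc_subseqs by (intro Max_ge) auto

lemma LIS_attained:
  assumes "j < length A"
  obtains ps where "is_inc_subseq A i j ps" "length ps = LIS A i j"
proof -
  have "is_inc_subseq A i j []" using assms by (simp add: is_inc_subseq_def)
  then have "LIS A i j \<in> length ` {ps. is_inc_subseq A i j ps}"
    unfolding LIS_def using finite_inc_subseqs by (intro Max_in) auto
  then show ?thesis using that by auto
qed

lemma LIS_mono: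
  assumes "i' \<le> i" "j \<le> j'" "j' < length A"
  shows "LIS A i j \<le> LIS A i' j'"
proof -
  obtain ps where ps: "is_inc_subseq A i j ps" "length ps = LIS A i j"
    using LIS_attained assms(2,3) by (metis le_less_trans)
  then have "is_inc_subseq A i' j' ps"
    using assms by (auto simp: is_inc_subseq_def)
  then show ?thesis using ps(2) length_le_LIS by metis
qed

lemma LIS_empty_range:
  assumes "j < i" "j < length A"
  shows "LIS A i j = 0"
proof -
  obtain ps where "is_inc_subseq A i j ps" "length ps = LIS A i j"
    using LIS_attained assms(2) by blast
  then show ?thesis using assms(1) by (auto simp: is_inc_subseq_def)
qed

lemma LIS_le_Suc_LIS_Suc:
  assumes "j < length A"
  shows "LIS A i j \<le> Suc (LIS A (Suc i) j)"
proof -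
  obtain ps where ps: "is_inc_subseq A i j ps" "length ps = LIS A i j"
    using LIS_attained assms by blast
  have "is_inc_subseq A (Suc i) j (tl ps)"
  proof (cases ps)
    case (Cons p rest)
    then show ?thesis
      using ps(1) by (fastforce simp: is_inc_subseq_iff inc_before_def)
  qed (use assms in \<open>simp add: is_inc_subseq_def\<close>)
  then show ?thesis using ps(2) length_le_LIS by fastforce
qed

lemma LIS_le_Suc_LIS_pred:
  assumes "j < length A"
  shows "LIS A i j \<le> Suc (LIS A i (j - 1))"
proof -
  obtain ps where ps: "is_inc_subseq A i j ps" "length ps = LIS A i j"
    using LIS_attained assms by blast
  have "is_inc_subseq A i (j - 1) (butlast ps)"
  proof (cases ps rule: rev_exhaust)
    case (snoc rest p)
    then show ?thesis
      using ps(1) assms by (fastforce simp: is_inc_subseq_iff inc_before_def sorted_wrt_append)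
  qed (use assms in \<open>simp add: is_inc_subseq_def\<close>)
  then show ?thesis using ps(2) length_le_LIS by fastforce
qed

lemma cover_step_SomeD:
  assumes "cover_step A k1 k2 i = Some (q, j)"
  shows "\<exists>j. i \<le> j \<and> j < length A \<and> k2 \<le> LIS A i j"
    and "j = (LEAST j. i \<le> j \<and> j < length A \<and> k2 \<le> LIS A i j)"
    and "q = (GREATEST q. q \<le> j \<and> k1 \<le> LIS A q j)"
  using assms by (auto simp: cover_step_def Let_def split: if_splits)

lemma cover_step_prefix:
  assumes "cover_step A k1 k2 i = Some (q, j)"
  shows "i \<le> j \<and> j < length A \<and> k2 \<le> LIS A i j"
  unfolding cover_step_SomeD(2)[OF assms] using cover_step_SomeD(1)[OF assms] by (rule LeastI_ex)

lemma LIS_cover_step_prefix: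
  assumes step: "cover_step A k1 k2 i = Some (q, j)" and "0 < k2"
  shows "LIS A i j = k2"
proof -
  have j: "i \<le> j" "j < length A" "k2 \<le> LIS A i j" using cover_step_prefix[OF step] by auto
  have "LIS A i j \<le> k2"
  proof (cases "i < j")
    case True
    then have "j - 1 < (LEAST j. i \<le> j \<and> j < length A \<and> k2 \<le> LIS A i j)"
      using cover_step_SomeD(2)[OF step] by linarith
    then have "\<not> (i \<le> j - 1 \<and> j - 1 < length A \<and> k2 \<le> LIS A i (j - 1))"
      by (rule not_less_Least)
    then show ?thesis using True j(2) LIS_le_Suc_LIS_pred[of j A i] by linarith
  next
    case False
    then show ?thesis
      using j LIS_le_Suc_LIS_Suc[of j A i] LIS_empty_range[of j "Suc i" A] \<open>0 < k2\<close> by simp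
  qed
  with j show ?thesis by simp
qed

lemma LIS_cover_step_suffix:
  assumes step: "cover_step A k1 k2 i = Some (q, j)" and "0 < k1" "k1 \<le> k2"
  shows "LIS A q j = k1"
proof -
  have j: "i \<le> j" "j < length A" "k2 \<le> LIS A i j" using cover_step_prefix[OF step] by auto
  have q: "q \<le> j \<and> k1 \<le> LIS A q j"
    unfolding cover_step_SomeD(3)[OF step]
    by (rule GreatestI_nat[where k = i]) (use j assms in auto)
  have "LIS A (Suc q) j < k1"
  proof (cases "Suc q \<le> j")
    case True
    show ?thesis
    proof (rule ccontr)
      assume "\<not> LIS A (Suc q) j < k1"
      then have "Suc q \<le> (GREATEST q. q \<le> j \<and> k1 \<le> LIS A q j)"
        using True by (intro Greatest_le_nat[where b = j]) auto
      then show False using cover_step_SomeD(3)[OF step] by simp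
    qed
  qed (use LIS_empty_range j \<open>0 < k1\<close> in auto)
  then show ?thesis using q LIS_le_Suc_LIS_Suc[OF j(2), of q] by linarith
qed

context
  fixes A :: "real list" and b c d k1 k2 :: nat and X Y :: "nat list"
  assumes distinct_A: "distinct A"
    and k1_le_k2: "k1 \<le> k2" and c_le_d: "c \<le> d"
    and LIS_b_c: "LIS A b c \<le> k1" and LIS_b_d: "LIS A b d \<le> k2"
    and Y: "is_inc_subseq A b c Y" and length_Y: "length Y = k1"
    and X: "is_inc_subseq A b d X" and length_X: "length X = k2"
begin

lemma crossing_values:
  assumes t: "t < k1" and cross: "X ! t < Y ! t"
  shows "A ! (Y ! t) < A ! (X ! t)"
proof (rule ccontr)
  assume "\<not> A ! (Y ! t) < A ! (X ! t)"
  moreover have "A ! (Y ! t) \<noteq> A ! (X ! t)"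
    using distinct_A cross t k1_le_k2 is_inc_subseq_nth(3)[OF X] is_inc_subseq_nth(3)[OF Y]
    by (simp add: length_X length_Y nth_eq_iff_index_eq)
  ultimately have "inc_before A (X ! t) (Y ! t)" using cross by (simp add: inc_before_def)
  then have "is_inc_subseq A b c (take (Suc t) X @ drop t Y)"
    using t k1_le_k2 cross is_inc_subseq_nth(2)[OF Y, of t]
    by (intro is_inc_subseq_splice[OF X Y]) (auto simp: length_X length_Y)
  then have "Suc k1 \<le> LIS A b c"
    using t k1_le_k2 length_le_LIS by (fastforce simp: length_X length_Y)
  then show False using LIS_b_c by simp
qed

lemma crossing_link:
  assumes s: "Suc s < k1" and cross: "X ! s < Y ! s" and no_cross: "Y ! Suc s \<le> X ! Suc s"
  shows "inc_before A (X ! s) (Y ! Suc s)"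
proof -
  have "A ! (X ! Suc s) \<le> A ! (Y ! Suc s)"
  proof (rule ccontr)
    assume "\<not> A ! (X ! Suc s) \<le> A ! (Y ! Suc s)"
    then have "inc_before A (Y ! Suc s) (X ! Suc s)"
      using no_cross by (auto simp: inc_before_def order.order_iff_strict)
    then have "is_inc_subseq A b d (take (Suc (Suc s)) Y @ drop (Suc s) X)"
      using s c_le_d is_inc_subseq_nth(2)[OF Y, of "Suc s"]
      by (intro is_inc_subseq_splice[OF Y X]) (auto simp: length_Y)
    then have "Suc k2 \<le> LIS A b d"
      using s k1_le_k2 length_le_LIS by (fastforce simp: length_X length_Y)
    then show False using LIS_b_d by simp
  qed
  moreover have "inc_before A (X ! s) (X ! Suc s)" "inc_before A (Y ! s) (Y ! Suc s)"
    using s k1_le_k2 is_inc_subseq_nth_less[OF X] is_inc_subseq_nth_less[OF Y]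
    by (auto simp: length_X length_Y)
  ultimately show ?thesis using cross by (auto simp: inc_before_def)
qed

lemma crossing_swap:
  assumes s: "s < k1" and cross: "X ! s < Y ! s"
    and no_cross: "Suc s < k1 \<Longrightarrow> Y ! Suc s \<le> X ! Suc s"
  shows "is_inc_subseq A b c (take (Suc s) X @ drop (Suc s) Y)"
  using s k1_le_k2 cross is_inc_subseq_nth(2)[OF Y, of s] crossing_link no_cross
  by (intro is_inc_subseq_splice[OF X Y]) (auto simp: length_X length_Y)

lemma lexmin_inc_subseq_nth_le:
  assumes Y_min: "lexmin_inc_subseq A b c k1 Y" and t: "t < k1"
  shows "Y ! t \<le> X ! t"
proof (rule ccontr)
  assume "\<not> Y ! t \<le> X ! t"
  then have ex: "\<exists>t. t < k1 \<and> X ! t < Y ! t" using t by auto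
  define t0 where "t0 = (LEAST t. t < k1 \<and> X ! t < Y ! t)"
  define s where "s = (GREATEST s. s < k1 \<and> X ! s < Y ! s)"
  have t0: "t0 < k1" "X ! t0 < Y ! t0"
    using LeastI_ex[OF ex] unfolding t0_def by auto
  have before_t0: "Y ! r \<le> X ! r" if "r < t0" for r
  proof (rule ccontr)
    assume "\<not> Y ! r \<le> X ! r"
    then have "t0 \<le> r" unfolding t0_def using that t0(1) by (intro Least_le) simp
    then show False using that by simp
  qed
  have "s < k1 \<and> X ! s < Y ! s"
    unfolding s_def by (rule GreatestI_nat[where k = t0 and b = k1]) (use t0 in auto)
  moreover have "t0 \<le> s"
    unfolding s_def by (rule Greatest_le_nat[where b = k1]) (use t0 in auto)
  ultimately have s: "s < k1" "X ! s < Y ! s" "t0 \<le> s" by auto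
  have after_s: "Y ! r \<le> X ! r" if "s < r" "r < k1" for r
  proof (rule ccontr)
    assume "\<not> Y ! r \<le> X ! r"
    then have "r \<le> s" unfolding s_def using that by (intro Greatest_le_nat[where b = k1]) auto
    then show False using that by simp
  qed
  define W where "W = take (Suc s) X @ drop (Suc s) Y"
  have W: "is_inc_subseq A b c W" "length W = k1" "W ! t0 = X ! t0"
    using crossing_swap[OF s(1,2)] after_s s k1_le_k2
    by (simp_all add: W_def length_X length_Y nth_append)
  define Z where "Z = take t0 Y @ drop t0 W"
  have "is_inc_subseq A b c Z"
  proof (cases t0)
    case 0
    then show ?thesis using W by (simp add: Z_def)
  next
    case (Suc r)
    have "r < k1" "t0 < k1" "t0 < k2" using Suc t0(1) k1_le_k2 by auto
    then have "inc_before A (X ! r) (X ! t0)" "inc_before A (Y ! r) (Y ! t0)" "Y ! r \<le> c"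
      using is_inc_subseq_nth_less[OF X] is_inc_subseq_nth_less[OF Y] is_inc_subseq_nth(2)[OF Y]
      by (simp_all add: Suc length_X length_Y)
    moreover have "Y ! r \<le> X ! r" using before_t0 Suc by simp
    ultimately have "inc_before A (Y ! r) (W ! t0)"
      using crossing_values[OF t0] W(3) by (auto simp: inc_before_def)
    then show ?thesis
      unfolding Z_def Suc using \<open>r < k1\<close> \<open>Y ! r \<le> c\<close>
      by (intro is_inc_subseq_splice[OF Y W(1)]) (simp_all add: length_Y)
  qed
  moreover have "length Z = k1" "take t0 Z = take t0 Y" "Z ! t0 = X ! t0"
    using t0 W by (auto simp: Z_def length_Y nth_append)
  ultimately have "Y ! t0 \<le> X ! t0"
    using lexmin_inc_subseq_nth_le_common_prefix[OF Y_min] t0 by metis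
  then show False using t0 by simp
qed

end

theorem lemma4:
  fixes A :: "real list" and k1 k2 m i b c q' d :: nat and Y X' :: "nat list"
  assumes "distinct A"
    and "0 < k1" and "k1 < k2"
    and "cover_start A k1 k2 m = Some i"
    and "cover_step A k1 k2 i = Some (b, c)"
    and "cover_step A k1 k2 b = Some (q', d)"
    and "lexmin_inc_subseq A b c k1 Y"
    and "lexmin_inc_subseq A b d k2 X'"
  shows "\<forall>t < k1. Y ! t \<le> X' ! t"
proof -
  have LIS_b_c: "LIS A b c = k1"
    using LIS_cover_step_suffix assms(2,3,5) by simp
  have LIS_b_d: "LIS A b d = k2"
    using LIS_cover_step_prefix assms(2,3,6) by simp
  have Y: "is_inc_subseq A b c Y" "length Y = k1"
    and X': "is_inc_subseq A b d X'" "length X' = k2"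
    using assms(7,8) by (auto simp: lexmin_inc_subseq_def)
  have "c \<le> d"
  proof (rule ccontr)
    assume "\<not> c \<le> d"
    then have "LIS A b d \<le> LIS A b c"
      using Y(1) by (intro LIS_mono) (auto simp: is_inc_subseq_def)
    then show False using LIS_b_c LIS_b_d assms(3) by simp
  qed
  then show ?thesis
    using lexmin_inc_subseq_nth_le[OF assms(1) _ _ _ _ Y X' assms(7)]
      LIS_b_c LIS_b_d assms(3) by simp
qed

end
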